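(* Let $n \geq 3$ and let $k$ be an integer with $0 < k < \frac{n}{2}$. Write points of $\mathbb{R}^n$ as $(x,y)$ with $x \in \mathbb{R}^{n-k}$ and $y \in \mathbb{R}^k$. Let $u$ be a convex function on $\{|x| < 1\} \cap \{|y| < 1\}$ satisfying $\det D^2 u \geq 1$ there, with $u \geq 0$ and $u = 0$ on $\{x = 0\}$. Then there is a constant $c(n) > 0$ such that for all $r < 1$, $$\inf_{|y|<1} \sup_{|x| = r} u(x,y) > c(n)\, r^{2 - \frac{2k}{n}}.$$
   Context: The inequality $\det D^2 u \geq 1$ for a convex function is understood in the weak (Alexandrov/viscosity) sense. *)

theory Defs
  imports "HOL-Analysis.Analysis"
begin

text \<open>Points of R^n are vectors p :: real^'n.  A set K of coordinate indices with
  card K = k selects the y-block; the remaining n-k coordinates form the x-block.\<close>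

definition xnorm :: "'n::finite set \<Rightarrow> real^'n \<Rightarrow> real" where
  "xnorm K p = sqrt (\<Sum>i\<in>UNIV - K. (p $ i)^2)"

definition ynorm :: "'n::finite set \<Rightarrow> real^'n \<Rightarrow> real" where
  "ynorm K p = sqrt (\<Sum>i\<in>K. (p $ i)^2)"

definition cyl :: "'n::finite set \<Rightarrow> (real^'n) set" where
  "cyl K = {p. xnorm K p < 1 \<and> ynorm K p < 1}"

definition subdiff_image :: "(real^'n::finite) set \<Rightarrow> (real^'n \<Rightarrow> real) \<Rightarrow> (real^'n) set \<Rightarrow> (real^'n) set" where
  "subdiff_image \<Omega> u E = {v. \<exists>p\<in>E. \<forall>q\<in>\<Omega>. u q \<ge> u p + v \<bullet> (q - p)}"

text \<open>det D^2 u \<ge> 1 in the Alexandrov sense: the Monge-Ampere measure of every Borel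
  subset E of \<Omega> dominates its Lebesgue measure.\<close>
definition MA_ge_one :: "(real^'n::finite) set \<Rightarrow> (real^'n \<Rightarrow> real) \<Rightarrow> bool" where
  "MA_ge_one \<Omega> u \<longleftrightarrow> (\<forall>E \<in> sets borel. E \<subseteq> \<Omega> \<longrightarrow>
      subdiff_image \<Omega> u E \<in> sets lebesgue \<and>
      emeasure lebesgue (subdiff_image \<Omega> u E) \<ge> emeasure lebesgue E)"

end

theory Submission
  imports Defs
begin

text \<open>Fix q on the y-axis and let h be the supremum of u over the x-sphere of radius r through q.
  Convexity along x-lines through q gives u \<le> h on the whole x-ball, and since u vanishes on the
  y-axis, convexity along segments to the axis gives u \<le> h on a box around q/2 with sides of order
  r/sqrt n in the n-k x-directions and 1/sqrt n in the k y-directions. As u \<ge> 0, every subgradient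
  of u on the box of half that size is bounded componentwise by h over the corresponding side, so
  the Alexandrov inequality det D^2 u \<ge> 1 gives vol(box)^2 \<le> C(n) h^n, that is
  r^(2(n-k)) \<le> C(n) h^n.\<close>

lemma convex_on_le_on_symmetric_segment:
  fixes u :: "'a::real_vector \<Rightarrow> real"
  assumes "convex_on \<Omega> u" "q + y \<in> \<Omega>" "q - y \<in> \<Omega>" "u (q + y) \<le> h" "u (q - y) \<le> h"
    and "\<bar>c\<bar> \<le> 1"
  shows "u (q + c *\<^sub>R y) \<le> h"
proof -
  define t where "t = (1 - c) / 2"
  have t: "0 \<le> t" "t \<le> 1" using assms(6) by (auto simp: t_def)
  have "q + c *\<^sub>R y = (1 - t) *\<^sub>R (q + y) + t *\<^sub>R (q - y)"
    by (simp add: t_def algebra_simps flip: scaleR_add_left)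
  then have "u (q + c *\<^sub>R y) \<le> (1 - t) * u (q + y) + t * u (q - y)"
    using convex_onD[OF assms(1) t assms(2,3)] by simp
  also have "\<dots> \<le> (1 - t) * h + t * h"
    using t assms(4,5) by (intro add_mono mult_left_mono) auto
  finally show ?thesis by (simp add: algebra_simps)
qed

lemma norm_le_sqrt_card_cart:
  fixes x :: "real^'n::finite"
  assumes "\<And>i. \<bar>x $ i\<bar> \<le> c"
  shows "norm x \<le> sqrt CARD('n) * c"
proof -
  have c: "0 \<le> c" using assms[of undefined] by linarith
  have "(\<Sum>i\<in>UNIV. (x $ i)^2) \<le> (\<Sum>i\<in>(UNIV::'n set). c^2)"
    by (intro sum_mono) (metis abs_le_square_iff abs_of_nonneg assms c)
  then have "norm x \<le> sqrt (CARD('n) * c^2)"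
    by (simp add: norm_vec_def L2_set_def)
  with c show ?thesis by (simp add: real_sqrt_mult)
qed

lemma mem_cbox_centered_cart:
  fixes x m t :: "real^'n::finite"
  shows "x \<in> cbox (m - t) (m + t) \<longleftrightarrow> (\<forall>i. \<bar>x $ i - m $ i\<bar> \<le> t $ i)"
  by (auto simp: mem_box_cart abs_le_iff algebra_simps)

lemma cbox_centered_subset_double_cart:
  fixes m t :: "real^'n::finite"
  assumes "\<And>i. 0 \<le> t $ i"
  shows "cbox (m - t) (m + t) \<subseteq> cbox (m - 2 *\<^sub>R t) (m + 2 *\<^sub>R t)"
proof (clarsimp simp: subset_iff mem_cbox_centered_cart)
  fix x i assume "\<forall>i. \<bar>x $ i - m $ i\<bar> \<le> t $ i"
  then have "\<bar>x $ i - m $ i\<bar> \<le> t $ i" by blast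
  with assms[of i] show "\<bar>x $ i - m $ i\<bar> \<le> 2 * t $ i" by linarith
qed

lemma emeasure_lebesgue_cbox_cart:
  fixes a b :: "real^'n::finite"
  assumes "\<And>i. a $ i \<le> b $ i"
  shows "emeasure lebesgue (cbox a b) = ennreal (\<Prod>i\<in>UNIV. b $ i - a $ i)"
proof -
  have "a \<in> cbox a b" using assms by (simp add: mem_box_cart)
  then have "cbox a b \<noteq> {}" by blast
  then have "measure lborel (cbox a b) = (\<Prod>i\<in>UNIV. b $ i - a $ i)"
    by (simp add: content_cbox_cart)
  then show ?thesis
    using emeasure_lborel_cbox_finite[of a b] by (simp add: emeasure_eq_ennreal_measure)
qed

lemma subdiff_image_cbox_subset:
  fixes u :: "real^'n::finite \<Rightarrow> real" and m t :: "real^'n"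
  assumes t_pos: "\<And>i. 0 < t $ i"
    and box: "cbox (m - 2 *\<^sub>R t) (m + 2 *\<^sub>R t) \<subseteq> \<Omega>"
    and bounds: "\<And>p. p \<in> cbox (m - 2 *\<^sub>R t) (m + 2 *\<^sub>R t) \<Longrightarrow> 0 \<le> u p \<and> u p \<le> h"
  shows "subdiff_image \<Omega> u (cbox (m - t) (m + t))
    \<subseteq> cbox (- (\<chi> i. h / t $ i)) (\<chi> i. h / t $ i)"
proof
  fix v assume "v \<in> subdiff_image \<Omega> u (cbox (m - t) (m + t))"
  then obtain p where p_small: "p \<in> cbox (m - t) (m + t)"
    and subgrad: "\<forall>q\<in>\<Omega>. u p + v \<bullet> (q - p) \<le> u q"
    by (auto simp: subdiff_image_def)
  then have p: "\<forall>i. \<bar>p $ i - m $ i\<bar> \<le> t $ i" by (simp add: mem_cbox_centered_cart)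
  have p_big: "p \<in> cbox (m - 2 *\<^sub>R t) (m + 2 *\<^sub>R t)"
    using p_small t_pos cbox_centered_subset_double_cart[of t m] by (auto simp: less_imp_le)
  have step: "\<sigma> * v $ i \<le> h" if "\<bar>\<sigma>\<bar> \<le> t $ i" for \<sigma> i
  proof -
    define p' where "p' = p + \<sigma> *\<^sub>R axis i 1"
    have "\<bar>p' $ j - m $ j\<bar> \<le> (2 *\<^sub>R t) $ j" for j
      using p[rule_format, of j] that t_pos[of j] by (auto simp: p'_def axis_def)
    then have "p' \<in> cbox (m - 2 *\<^sub>R t) (m + 2 *\<^sub>R t)" by (simp add: mem_cbox_centered_cart)
    then have "u p + \<sigma> * v $ i \<le> h"
      using subgrad box bounds[of p'] by (force simp: p'_def inner_axis)
    with bounds[OF p_big] show ?thesis by linarith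
  qed
  show "v \<in> cbox (- (\<chi> i. h / t $ i)) (\<chi> i. h / t $ i)"
  proof (unfold mem_box_cart, intro allI conjI)
    fix i
    show "v $ i \<le> (\<chi> i. h / t $ i) $ i"
      using step[of "t $ i" i] t_pos[of i] by (simp add: field_simps)
    show "(- (\<chi> i. h / t $ i)) $ i \<le> v $ i"
      using step[of "- t $ i" i] t_pos[of i] by (simp add: field_simps)
  qed
qed

lemma MA_ge_one_cbox_bound:
  fixes u :: "real^'n::finite \<Rightarrow> real" and m t :: "real^'n"
  assumes MA: "MA_ge_one \<Omega> u"
    and t_pos: "\<And>i. 0 < t $ i"
    and box: "cbox (m - 2 *\<^sub>R t) (m + 2 *\<^sub>R t) \<subseteq> \<Omega>"
    and bounds: "\<And>p. p \<in> cbox (m - 2 *\<^sub>R t) (m + 2 *\<^sub>R t) \<Longrightarrow> 0 \<le> u p \<and> u p \<le> h"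
  shows "(\<Prod>i\<in>UNIV. t $ i)^2 \<le> h ^ CARD('n)"
proof -
  define E where "E = cbox (m - t) (m + t)"
  define w where "w = (\<chi> i. h / t $ i)"
  define T where "T = (\<Prod>i\<in>UNIV. t $ i)"
  have T_pos: "0 < T" using t_pos by (simp add: T_def prod_pos)
  have "m \<in> cbox (m - 2 *\<^sub>R t) (m + 2 *\<^sub>R t)"
    using t_pos by (simp add: mem_cbox_centered_cart less_imp_le)
  then have h: "0 \<le> h" using bounds by force
  have "E \<subseteq> cbox (m - 2 *\<^sub>R t) (m + 2 *\<^sub>R t)"
    unfolding E_def using t_pos by (intro cbox_centered_subset_double_cart less_imp_le)
  then have "E \<subseteq> \<Omega>" "E \<in> sets borel" using box by (auto simp: E_def)
  with MA have "emeasure lebesgue E \<le> emeasure lebesgue (subdiff_image \<Omega> u E)"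
    unfolding MA_ge_one_def by blast
  also have "\<dots> \<le> emeasure lebesgue (cbox (- w) w)"
    using subdiff_image_cbox_subset[OF t_pos box bounds] by (intro emeasure_mono) (auto simp: E_def w_def)
  finally have "ennreal (\<Prod>i\<in>UNIV. 2 * t $ i) \<le> ennreal (\<Prod>i\<in>UNIV. 2 * (h / t $ i))"
    using t_pos h unfolding E_def w_def
    by (subst (asm) (1 2) emeasure_lebesgue_cbox_cart) (auto simp: less_imp_le)
  then have "(\<Prod>i\<in>UNIV. 2 * t $ i) \<le> (\<Prod>i\<in>UNIV. 2 * (h / t $ i))"
    using t_pos h by (subst (asm) ennreal_le_iff) (auto intro!: prod_nonneg divide_nonneg_pos)
  then have "2 ^ CARD('n) * T \<le> 2 ^ CARD('n) * (h ^ CARD('n) / T)"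
    by (simp add: T_def prod.distrib prod_dividef)
  then have "T \<le> h ^ CARD('n) / T" by (subst (asm) mult_le_cancel_left_pos) simp_all
  with T_pos show ?thesis by (simp add: T_def power2_eq_square field_simps)
qed

definition xpart :: "'n::finite set \<Rightarrow> real^'n \<Rightarrow> real^'n" where
  "xpart K p = (\<chi> i. if i \<in> K then 0 else p $ i)"

definition ypart :: "'n::finite set \<Rightarrow> real^'n \<Rightarrow> real^'n" where
  "ypart K p = (\<chi> i. if i \<in> K then p $ i else 0)"

lemma xpart_nth [simp]: "xpart K p $ i = (if i \<in> K then 0 else p $ i)"
  by (simp add: xpart_def)

lemma ypart_nth [simp]: "ypart K p $ i = (if i \<in> K then p $ i else 0)"
  by (simp add: ypart_def)

lemma xpart_add_ypart: "xpart K p + ypart K p = p"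
  by (simp add: vec_eq_iff)

lemma xpart_eq_0_iff: "xpart K p = 0 \<longleftrightarrow> (\<forall>i\<in>UNIV - K. p $ i = 0)"
  by (auto simp: vec_eq_iff)

lemma ypart_eq_iff: "ypart K p = ypart K q \<longleftrightarrow> (\<forall>i\<in>K. p $ i = q $ i)"
  by (auto simp: vec_eq_iff)

lemma linear_xpart: "linear (xpart K)"
  by (rule linearI) (auto simp: vec_eq_iff)

lemma linear_ypart: "linear (ypart K)"
  by (rule linearI) (auto simp: vec_eq_iff)

lemma xnorm_eq_norm_xpart: "xnorm K p = norm (xpart K p)"
proof -
  have "(\<Sum>i\<in>UNIV. (xpart K p $ i)^2) = (\<Sum>i\<in>UNIV. if i \<in> K then 0 else (p $ i)^2)"
    by (rule sum.cong) auto
  also have "\<dots> = (\<Sum>i\<in>UNIV - K. (p $ i)^2)"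
    by (simp add: sum.If_cases Diff_eq)
  finally show ?thesis by (simp add: xnorm_def norm_vec_def L2_set_def)
qed

lemma ynorm_eq_norm_ypart: "ynorm K p = norm (ypart K p)"
proof -
  have "(\<Sum>i\<in>UNIV. (ypart K p $ i)^2) = (\<Sum>i\<in>UNIV. if i \<in> K then (p $ i)^2 else 0)"
    by (rule sum.cong) auto
  also have "\<dots> = (\<Sum>i\<in>K. (p $ i)^2)"
    by (simp add: sum.If_cases)
  finally show ?thesis by (simp add: ynorm_def norm_vec_def L2_set_def)
qed

lemma cyl_eq_vimage: "cyl K = xpart K -` ball 0 1 \<inter> ypart K -` ball 0 1"
  by (auto simp: cyl_def xnorm_eq_norm_xpart ynorm_eq_norm_ypart)

lemma continuous_on_xpart: "continuous_on S (xpart K)"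
  by (intro linear_continuous_on linear_conv_bounded_linear[THEN iffD1] linear_xpart)

lemma continuous_on_ypart: "continuous_on S (ypart K)"
  by (intro linear_continuous_on linear_conv_bounded_linear[THEN iffD1] linear_ypart)

lemma open_cyl: "open (cyl K)"
  unfolding cyl_eq_vimage
  by (intro open_Int open_vimage continuous_on_xpart continuous_on_ypart open_ball)

lemma convex_cyl: "convex (cyl K)"
  unfolding cyl_eq_vimage
  by (intro convex_Int convex_linear_vimage linear_xpart linear_ypart convex_ball)

definition xsphere :: "'n::finite set \<Rightarrow> real^'n \<Rightarrow> real \<Rightarrow> (real^'n) set" where
  "xsphere K q r = {p. (\<forall>i\<in>K. p $ i = q $ i) \<and> xnorm K p = r}"

lemma xsphere_eq: "xsphere K q r = {p. ypart K p = ypart K q \<and> norm (xpart K p) = r}"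
  by (simp add: xsphere_def ypart_eq_iff xnorm_eq_norm_xpart)

lemma compact_xsphere: "compact (xsphere K q r)"
proof (rule compact_eq_bounded_closed[THEN iffD2], rule conjI)
  show "bounded (xsphere K q r)"
  proof (rule boundedI)
    fix p assume "p \<in> xsphere K q r"
    then have "norm (xpart K p) + norm (ypart K p) = r + norm (ypart K q)"
      by (simp add: xsphere_eq)
    then show "norm p \<le> r + norm (ypart K q)"
      using norm_triangle_ineq[of "xpart K p" "ypart K p"] by (simp add: xpart_add_ypart)
  qed
  show "closed (xsphere K q r)"
    unfolding xsphere_eq
    by (intro closed_Collect_conj closed_Collect_eq continuous_on_xpart continuous_on_ypart
        continuous_on_norm continuous_on_const)
qed

lemma xsphere_subset_cyl:
  assumes "ynorm K q < 1" "r < 1"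
  shows "xsphere K q r \<subseteq> cyl K"
  using assms by (auto simp: xsphere_def cyl_def ynorm_def)

lemma add_mem_xsphere:
  assumes "xpart K q = 0" "ypart K y = 0" "norm y = r"
  shows "q + y \<in> xsphere K q r"
proof -
  have "xpart K y = y" using xpart_add_ypart[of K y] assms(2) by simp
  then have "xpart K (q + y) = y" "ypart K (q + y) = ypart K q"
    using assms(1,2) by (simp_all add: linear_add[OF linear_xpart] linear_add[OF linear_ypart])
  with assms(3) show ?thesis by (simp add: xsphere_eq)
qed

lemma xvector_of_norm:
  assumes "K \<noteq> UNIV" "0 \<le> r"
  obtains y :: "real^'n::finite" where "ypart K y = 0" "norm y = r"
proof -
  obtain j where "j \<notin> K" using assms(1) by blast
  then have "ypart K (r *\<^sub>R axis j 1) = 0" by (simp add: vec_eq_iff axis_def)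
  moreover have "norm (r *\<^sub>R axis j (1::real)) = r" using assms(2) by simp
  ultimately show ?thesis by (rule that)
qed

lemma powr_pow_eq_power:
  fixes r :: real and k N :: nat
  assumes "0 < r" "k \<le> N" "0 < N"
  shows "(r powr (2 - 2 * real k / real N)) ^ N = r ^ (2 * (N - k))"
proof -
  have "real N * (2 - 2 * real k / real N) = real (2 * (N - k))"
    using assms(2,3) by (simp add: of_nat_diff field_simps)
  with assms(1) show ?thesis using powr_realpow[OF assms(1), of "2 * (N - k)"] by (simp add: powr_power)
qed

locale cylinder_MA_solution =
  fixes K :: "'n::finite set" and u :: "real^'n \<Rightarrow> real"
  assumes convex: "convex_on (cyl K) u"
    and MA: "MA_ge_one (cyl K) u"
    and nonneg: "\<And>p. p \<in> cyl K \<Longrightarrow> 0 \<le> u p"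
    and vanishes: "\<And>p. p \<in> cyl K \<Longrightarrow> xpart K p = 0 \<Longrightarrow> u p = 0"
    and K_proper: "K \<noteq> UNIV"
begin

definition xsphere_sup :: "real^'n \<Rightarrow> real \<Rightarrow> real" where
  "xsphere_sup q r = (SUP p\<in>xsphere K q r. u p)"

context
  fixes q :: "real^'n" and r :: real
  assumes q_axis: "xpart K q = 0" and q_cyl: "ynorm K q < 1" and r: "0 < r" "r < 1"
begin

lemma ypart_q: "ypart K q = q"
  using xpart_add_ypart[of K q] q_axis by simp

lemma le_xsphere_sup:
  assumes "p \<in> xsphere K q r"
  shows "u p \<le> xsphere_sup q r"
proof -
  have "continuous_on (xsphere K q r) u"
    using convex_on_continuous[OF open_cyl convex] xsphere_subset_cyl[OF q_cyl r(2)]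
    by (rule continuous_on_subset)
  then have "bdd_above (u ` xsphere K q r)"
    by (intro bounded_imp_bdd_above compact_imp_bounded compact_continuous_image compact_xsphere)
  with assms show ?thesis unfolding xsphere_sup_def by (rule cSUP_upper)
qed

lemma xsphere_sup_nonneg: "0 \<le> xsphere_sup q r"
proof -
  obtain y where "ypart K y = 0" "norm y = r" by (rule xvector_of_norm[OF K_proper less_imp_le[OF r(1)]])
  then have "q + y \<in> xsphere K q r" by (rule add_mem_xsphere[OF q_axis])
  then show ?thesis
    using nonneg[of "q + y"] le_xsphere_sup[of "q + y"] xsphere_subset_cyl[OF q_cyl r(2)] by auto
qed

lemma le_xsphere_sup_on_xball:
  assumes "ypart K p = ypart K q" "xnorm K p \<le> r"
  shows "u p \<le> xsphere_sup q r"
proof -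
  define x where "x = xpart K p"
  have p: "p = q + x" using xpart_add_ypart[of K p] by (simp add: x_def assms(1) ypart_q add.commute)
  have x: "ypart K x = 0" "norm x \<le> r" using assms(2) by (auto simp: x_def vec_eq_iff xnorm_eq_norm_xpart)
  obtain y c where y: "ypart K y = 0" "norm y = r" and c: "\<bar>c\<bar> \<le> 1" and "x = c *\<^sub>R y"
  proof (cases "x = 0")
    case True
    obtain y where "ypart K y = 0" "norm y = r" by (rule xvector_of_norm[OF K_proper less_imp_le[OF r(1)]])
    with True show ?thesis using that[of y 0] by simp
  next
    case False
    have "ypart K ((r / norm x) *\<^sub>R x) = 0" using x(1) by (simp add: linear_cmul[OF linear_ypart])
    moreover have "norm ((r / norm x) *\<^sub>R x) = r" "\<bar>norm x / r\<bar> \<le> 1"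
      "x = (norm x / r) *\<^sub>R ((r / norm x) *\<^sub>R x)"
      using False x(2) r(1) by auto
    ultimately show ?thesis by (rule that)
  qed
  have "ypart K (- y) = 0" using y(1) by (simp add: linear_neg[OF linear_ypart])
  then have "q + y \<in> xsphere K q r" "q - y \<in> xsphere K q r"
    using add_mem_xsphere[OF q_axis, of y r] add_mem_xsphere[OF q_axis, of "- y" r] y by simp_all
  then show ?thesis unfolding p \<open>x = c *\<^sub>R y\<close>
    using xsphere_subset_cyl[OF q_cyl r(2)] le_xsphere_sup c
    by (intro convex_on_le_on_symmetric_segment[OF convex]) auto
qed

lemma q_nth_eq_0: "i \<notin> K \<Longrightarrow> q $ i = 0"
  using q_axis by (simp add: xpart_eq_0_iff)

lemma le_xsphere_sup_on_box:
  assumes near: "\<And>i. \<bar>p $ i - q $ i / 2\<bar> \<le> (if i \<in> K then 1 else r) / (4 * sqrt CARD('n))"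
  shows "p \<in> cyl K \<and> 0 \<le> u p \<and> u p \<le> xsphere_sup q r"
proof -
  \<comment> \<open>p is the midpoint of p1, in the x-ball through q, and p2, on the y-axis where u vanishes.\<close>
  define p1 where "p1 = q + 2 *\<^sub>R xpart K p"
  define p2 where "p2 = 2 *\<^sub>R ypart K p - q"
  have p_mid: "p = (1 - 1/2) *\<^sub>R p1 + (1/2) *\<^sub>R p2"
    using xpart_add_ypart[of K p] by (simp add: p1_def p2_def algebra_simps)
  have "\<bar>xpart K p1 $ i\<bar> \<le> r / (2 * sqrt CARD('n))" for i
    using near[of i] r(1) q_nth_eq_0[of i] by (auto simp: p1_def field_simps)
  then have "norm (xpart K p1) \<le> r / 2"
    using norm_le_sqrt_card_cart[of "xpart K p1" "r / (2 * sqrt CARD('n))"] by simp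
  moreover have "ypart K p1 = ypart K q" by (simp add: p1_def vec_eq_iff)
  ultimately have p1: "p1 \<in> cyl K" "u p1 \<le> xsphere_sup q r"
    using q_cyl r le_xsphere_sup_on_xball[of p1]
    by (auto simp: cyl_def xnorm_eq_norm_xpart ynorm_eq_norm_ypart)
  have "\<bar>ypart K p2 $ i\<bar> \<le> 1 / (2 * sqrt CARD('n))" for i
    using near[of i] by (auto simp: p2_def field_simps)
  then have "norm (ypart K p2) \<le> 1 / 2"
    using norm_le_sqrt_card_cart[of "ypart K p2" "1 / (2 * sqrt CARD('n))"] by simp
  moreover have "xpart K p2 = 0" using q_nth_eq_0 by (simp add: p2_def vec_eq_iff)
  ultimately have p2: "p2 \<in> cyl K" "u p2 = 0"
    using vanishes[of p2] by (auto simp: cyl_def xnorm_eq_norm_xpart ynorm_eq_norm_ypart)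
  have "p \<in> cyl K"
    unfolding p_mid using convexD[OF convex_cyl p1(1) p2(1)] by simp
  moreover have "u p \<le> (1 - 1/2) * u p1 + (1/2) * u p2"
    unfolding p_mid by (rule convex_onD[OF convex _ _ p1(1) p2(1)]) simp_all
  ultimately show ?thesis using p1(2) p2(2) xsphere_sup_nonneg nonneg by auto
qed

lemma xsphere_sup_lower_bound:
  "r powr (2 - 2 * real (card K) / real CARD('n)) / (64 * real CARD('n)) \<le> xsphere_sup q r"
proof -
  define N where "N = CARD('n)"
  define t :: "real^'n" where "t = (\<chi> i. (if i \<in> K then 1 else r) / (8 * sqrt N))"
  define m :: "real^'n" where "m = (\<chi> i. q $ i / 2)"
  have N: "0 < N" "card K \<le> N" by (simp_all add: N_def card_mono)
  have t_pos: "0 < t $ i" for i using r(1) by (simp add: t_def N_def)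
  have box: "p \<in> cyl K \<and> 0 \<le> u p \<and> u p \<le> xsphere_sup q r"
    if "p \<in> cbox (m - 2 *\<^sub>R t) (m + 2 *\<^sub>R t)" for p
  proof (rule le_xsphere_sup_on_box)
    fix i
    have "\<bar>p $ i - m $ i\<bar> \<le> (2 *\<^sub>R t) $ i"
      using that unfolding mem_cbox_centered_cart by blast
    moreover have "m $ i = q $ i / 2" unfolding m_def by (rule vec_lambda_beta)
    moreover have "(2 *\<^sub>R t) $ i = (if i \<in> K then 1 else r) / (4 * sqrt CARD('n))"
      by (simp add: t_def N_def)
    ultimately show "\<bar>p $ i - q $ i / 2\<bar> \<le> (if i \<in> K then 1 else r) / (4 * sqrt CARD('n))"
      by simp
  qed
  have MA_bound: "(\<Prod>i\<in>UNIV. t $ i)^2 \<le> xsphere_sup q r ^ N"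
    unfolding N_def by (rule MA_ge_one_cbox_bound[OF MA t_pos]) (use box in blast)+
  have box_volume: "(\<Prod>i\<in>UNIV. t $ i)^2 = r ^ (2 * (N - card K)) / (64 * real N) ^ N"
  proof -
    have "(\<Prod>i\<in>UNIV. t $ i) = (\<Prod>i\<in>UNIV. if i \<in> K then 1 else r) / (8 * sqrt N) ^ N"
      by (simp add: t_def prod_dividef N_def)
    also have "(\<Prod>i\<in>UNIV. if i \<in> K then 1 else r) = r ^ card (UNIV - K)"
      by (simp add: prod.If_cases Diff_eq)
    finally have "(\<Prod>i\<in>UNIV. t $ i) = r ^ (N - card K) / (8 * sqrt N) ^ N"
      by (simp add: card_Diff_subset N_def)
    then have "(\<Prod>i\<in>UNIV. t $ i)^2 = (r^2) ^ (N - card K) / ((8 * sqrt N)^2) ^ N"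
      by (simp only: power_divide power_mult[symmetric] mult.commute)
    also have "(8 * sqrt N)^2 = 64 * real N" by (simp add: power_mult_distrib)
    finally show ?thesis by (simp add: power_mult)
  qed
  define c where "c = r powr (2 - 2 * real (card K) / real N) / (64 * real N)"
  have "c ^ Suc (N - 1) = (\<Prod>i\<in>UNIV. t $ i)^2"
    using N(1) by (simp add: c_def box_volume power_divide powr_pow_eq_power[OF r(1) N(2) N(1)])
  also have "\<dots> \<le> xsphere_sup q r ^ Suc (N - 1)"
    using MA_bound N(1) by simp
  finally have "c \<le> xsphere_sup q r"
    using xsphere_sup_nonneg by (rule power_le_imp_le_base)
  then show ?thesis by (simp add: c_def N_def)
qed

end

lemma INF_xsphere_sup_lower_bound:
  assumes "0 < r" "r < 1"
  shows "r powr (2 - 2 * real (card K) / real CARD('n)) / (64 * real CARD('n))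
    \<le> (INF q\<in>{q. (\<forall>i\<in>UNIV - K. q $ i = 0) \<and> ynorm K q < 1}.
          SUP p\<in>{p. (\<forall>i\<in>K. p $ i = q $ i) \<and> xnorm K p = r}. u p)"
proof (rule cINF_greatest)
  have "0 \<in> {q. (\<forall>i\<in>UNIV - K. q $ i = 0) \<and> ynorm K q < 1}" by (simp add: ynorm_def)
  then show "{q. (\<forall>i\<in>UNIV - K. q $ i = 0) \<and> ynorm K q < 1} \<noteq> {}" by blast
  fix q assume "q \<in> {q. (\<forall>i\<in>UNIV - K. q $ i = 0) \<and> ynorm K q < 1}"
  then show "r powr (2 - 2 * real (card K) / real CARD('n)) / (64 * real CARD('n))
      \<le> (SUP p\<in>{p. (\<forall>i\<in>K. p $ i = q $ i) \<and> xnorm K p = r}. u p)"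
    using xsphere_sup_lower_bound[of q r] assms
    by (simp add: xpart_eq_0_iff xsphere_sup_def xsphere_def)
qed

end

theorem lemma3p2:
  assumes "CARD('n::finite) \<ge> 3"
  shows "\<exists>c>0. \<forall>K::'n set. \<forall>u::real^'n \<Rightarrow> real. \<forall>r::real.
     0 < card K \<and> 2 * card K < CARD('n) \<and>
     convex_on (cyl K) u \<and> MA_ge_one (cyl K) u \<and>
     (\<forall>p\<in>cyl K. u p \<ge> 0) \<and>
     (\<forall>p\<in>cyl K. (\<forall>i\<in>UNIV - K. p $ i = 0) \<longrightarrow> u p = 0) \<and>
     0 < r \<and> r < 1
     \<longrightarrow> (INF q\<in>{q. (\<forall>i\<in>UNIV - K. q $ i = 0) \<and> ynorm K q < 1}.
            SUP p\<in>{p. (\<forall>i\<in>K. p $ i = q $ i) \<and> xnorm K p = r}. u p)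
         > c * r powr (2 - 2 * real (card K) / real CARD('n))"
proof (intro exI[of _ "1 / (128 * real CARD('n))"] conjI allI impI)
  show "0 < 1 / (128 * real CARD('n))" by simp
  fix K :: "'n set" and u :: "real^'n \<Rightarrow> real" and r :: real
  assume H: "0 < card K \<and> 2 * card K < CARD('n) \<and>
     convex_on (cyl K) u \<and> MA_ge_one (cyl K) u \<and>
     (\<forall>p\<in>cyl K. u p \<ge> 0) \<and>
     (\<forall>p\<in>cyl K. (\<forall>i\<in>UNIV - K. p $ i = 0) \<longrightarrow> u p = 0) \<and>
     0 < r \<and> r < 1"
  then interpret cylinder_MA_solution K u
    by unfold_locales (auto simp: xpart_eq_0_iff)
  have "1 / (128 * real CARD('n)) * r powr (2 - 2 * real (card K) / real CARD('n))
      < r powr (2 - 2 * real (card K) / real CARD('n)) / (64 * real CARD('n))"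
    using H by (simp add: field_simps)
  with H INF_xsphere_sup_lower_bound[of r]
  show "(INF q\<in>{q. (\<forall>i\<in>UNIV - K. q $ i = 0) \<and> ynorm K q < 1}.
            SUP p\<in>{p. (\<forall>i\<in>K. p $ i = q $ i) \<and> xnorm K p = r}. u p)
         > 1 / (128 * real CARD('n)) * r powr (2 - 2 * real (card K) / real CARD('n))"
    by linarith
qed

end
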